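(* Let $K$ be a field of characteristic zero and $n\geq 2$. If $\sigma$ is a Lie algebra automorphism of $\mathfrak{Div}_n^c$ such that $\sigma(\partial)=\partial$ for all $\partial\in\mathfrak{Div}_n^0$, then $\sigma$ is the identity.
   Context: $S_n=K[[x_1,\ldots,x_n]]$, $\partial_i=\partial/\partial x_i$, and $\operatorname{Der}_K(S_n)=\bigoplus_i S_n\partial_i$ is the Lie algebra of $K$-derivations of $S_n$ with the commutator bracket. For $\partial=\sum_i a_i\partial_i$, $\operatorname{div}(\partial)=\sum_i\partial a_i/\partial x_i$. $\mathfrak{Div}_n^0=\{\partial\in\operatorname{Der}_K(S_n)\mid\operatorname{div}(\partial)=0\}$ and $\mathfrak{Div}_n^c=\{\partial\in\operatorname{Der}_K(S_n)\mid\operatorname{div}(\partial)\in K\}$. *)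

theory Defs
  imports Main
begin

text \<open>Formal power series in n variables x_0..x_{n-1} over K are represented by their
coefficient functions on multi-indices alpha :: nat => nat (with alpha i = 0 for i >= n).\<close>

type_synonym 'k ps = "(nat \<Rightarrow> nat) \<Rightarrow> 'k"
type_synonym 'k der = "nat \<Rightarrow> 'k ps"

definition multi_idx :: "nat \<Rightarrow> (nat \<Rightarrow> nat) set" where
  "multi_idx n = {\<alpha>. \<forall>i\<ge>n. \<alpha> i = 0}"

definition PS :: "nat \<Rightarrow> 'k::zero ps set" where
  "PS n = {f. \<forall>\<alpha>. \<alpha> \<notin> multi_idx n \<longrightarrow> f \<alpha> = 0}"

definition ps_mult :: "'k::comm_ring_1 ps \<Rightarrow> 'k ps \<Rightarrow> 'k ps" where
  "ps_mult f g = (\<lambda>\<alpha>. \<Sum>\<beta>\<in>{\<beta>. \<beta> \<le> \<alpha>}. f \<beta> * g (\<lambda>i. \<alpha> i - \<beta> i))"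

definition ps_pderiv :: "nat \<Rightarrow> 'k::comm_ring_1 ps \<Rightarrow> 'k ps" where
  "ps_pderiv i f = (\<lambda>\<alpha>. of_nat (\<alpha> i + 1) * f (\<alpha>(i := \<alpha> i + 1)))"

text \<open>A derivation sum_i a_i d_i is represented by its coefficient family a.\<close>
definition Der :: "nat \<Rightarrow> 'k::zero der set" where
  "Der n = {a. (\<forall>i. a i \<in> PS n) \<and> (\<forall>i\<ge>n. a i = (\<lambda>_. 0))}"

definition apply_der :: "nat \<Rightarrow> 'k::comm_ring_1 der \<Rightarrow> 'k ps \<Rightarrow> 'k ps" where
  "apply_der n a f = (\<lambda>\<alpha>. \<Sum>i<n. ps_mult (a i) (ps_pderiv i f) \<alpha>)"

definition der_bracket :: "nat \<Rightarrow> 'k::comm_ring_1 der \<Rightarrow> 'k der \<Rightarrow> 'k der" where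
  "der_bracket n a b = (\<lambda>j \<alpha>. apply_der n a (b j) \<alpha> - apply_der n b (a j) \<alpha>)"

definition der_add :: "'k::plus der \<Rightarrow> 'k der \<Rightarrow> 'k der" where
  "der_add a b = (\<lambda>i \<alpha>. a i \<alpha> + b i \<alpha>)"

definition der_scale :: "'k::times \<Rightarrow> 'k der \<Rightarrow> 'k der" where
  "der_scale c a = (\<lambda>i \<alpha>. c * a i \<alpha>)"

definition der_div :: "nat \<Rightarrow> 'k::comm_ring_1 der \<Rightarrow> 'k ps" where
  "der_div n a = (\<lambda>\<alpha>. \<Sum>i<n. ps_pderiv i (a i) \<alpha>)"

definition ps_const :: "'k::zero \<Rightarrow> 'k ps" where
  "ps_const c = (\<lambda>\<alpha>. if \<alpha> = (\<lambda>_. 0) then c else 0)"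

definition Div0 :: "nat \<Rightarrow> 'k::comm_ring_1 der set" where
  "Div0 n = {a \<in> Der n. der_div n a = (\<lambda>_. 0)}"

definition Divc :: "nat \<Rightarrow> 'k::comm_ring_1 der set" where
  "Divc n = {a \<in> Der n. \<exists>c. der_div n a = ps_const c}"

definition Divc_aut :: "nat \<Rightarrow> ('k::comm_ring_1 der \<Rightarrow> 'k der) \<Rightarrow> bool" where
  "Divc_aut n \<sigma> \<longleftrightarrow> bij_betw \<sigma> (Divc n) (Divc n) \<and>
     (\<forall>a\<in>Divc n. \<forall>b\<in>Divc n. \<sigma> (der_add a b) = der_add (\<sigma> a) (\<sigma> b)) \<and>
     (\<forall>c. \<forall>a\<in>Divc n. \<sigma> (der_scale c a) = der_scale c (\<sigma> a)) \<and>
     (\<forall>a\<in>Divc n. \<forall>b\<in>Divc n. \<sigma> (der_bracket n a b) = der_bracket n (\<sigma> a) (\<sigma> b))"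

end

theory Submission
  imports Defs
begin

text \<open>Write \<open>E = x\<^sub>0 \<partial>\<^sub>0\<close>; since \<open>div E = 1\<close>, every element of \<open>Div\<^sup>c\<^sub>n\<close> is \<open>a\<^sub>0 + c E\<close> with
  \<open>a\<^sub>0 \<in> Div\<^sup>0\<^sub>n\<close>, so it suffices to show \<open>\<sigma> E = E\<close>. If \<open>b \<in> Div\<^sup>0\<^sub>n\<close> is an eigenvector of
  \<open>ad E\<close>, applying \<open>\<sigma>\<close> to \<open>[E, b] = \<lambda> b\<close> gives \<open>[\<sigma> E, b] = [E, b]\<close>. The eigenvectors
  \<open>\<partial>\<^sub>j\<close> force \<open>\<sigma> E - E\<close> to have constant coefficients, and the eigenvectors \<open>x\<^sub>m \<partial>\<^sub>k\<close>
  (\<open>k \<noteq> m\<close>, which needs \<open>n \<ge> 2\<close>) show that these constants vanish.\<close>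

definition coord_der :: "nat \<Rightarrow> 'k::zero ps \<Rightarrow> 'k der" where
  "coord_der j f = (\<lambda>i. if i = j then f else (\<lambda>_. 0))"

definition ps_var :: "nat \<Rightarrow> 'k::{zero,one} ps" where
  "ps_var j = (\<lambda>\<alpha>. if \<alpha> = (\<lambda>_. 0)(j := 1) then 1 else 0)"

lemma finite_le_multi_idx:
  assumes "\<alpha> \<in> multi_idx N"
  shows "finite {\<beta>. \<beta> \<le> \<alpha>}"
proof -
  have "{\<beta>. \<beta> \<le> \<alpha>} \<subseteq>
      {\<beta>. \<forall>i. (i \<in> {..<N} \<longrightarrow> \<beta> i \<in> {..sum \<alpha> {..<N}}) \<and> (i \<notin> {..<N} \<longrightarrow> \<beta> i = 0)}"
  proof (intro subsetI CollectI allI conjI impI)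
    fix \<beta> i assume "\<beta> \<in> {\<beta>. \<beta> \<le> \<alpha>}"
    then have le: "\<beta> i \<le> \<alpha> i" by (simp add: le_fun_def)
    show "\<beta> i \<in> {..sum \<alpha> {..<N}}" if "i \<in> {..<N}"
      using le member_le_sum[OF that, of \<alpha>] by simp
    show "\<beta> i = 0" if "i \<notin> {..<N}"
      using le that assms by (simp add: multi_idx_def)
  qed
  then show ?thesis
    by (rule finite_subset) (intro finite_set_of_finite_funs; simp)
qed

lemma ps_mult_zero_left [simp]: "ps_mult (\<lambda>_. 0) g = (\<lambda>_. 0)"
  by (simp add: ps_mult_def)

lemma ps_mult_zero_right [simp]: "ps_mult f (\<lambda>_. 0) = (\<lambda>_. 0)"
  by (simp add: ps_mult_def)

lemma ps_mult_at_zero: "ps_mult f g (\<lambda>_. 0) = f (\<lambda>_. 0) * g (\<lambda>_. 0)"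
proof -
  have "{\<beta>. \<beta> \<le> (\<lambda>_::nat. 0::nat)} = {\<lambda>_. 0}"
    by (auto simp: le_fun_def fun_eq_iff)
  then show ?thesis by (simp add: ps_mult_def)
qed

lemma ps_mult_const_left:
  assumes "g \<in> PS N"
  shows "ps_mult (ps_const c) g = (\<lambda>\<alpha>. c * g \<alpha>)"
proof
  fix \<alpha> :: "nat \<Rightarrow> nat"
  show "ps_mult (ps_const c) g \<alpha> = c * g \<alpha>"
  proof (cases "finite {\<beta>. \<beta> \<le> \<alpha>}")
    case True
    have "ps_mult (ps_const c) g \<alpha> =
        (\<Sum>\<beta>\<in>{\<beta>. \<beta> \<le> \<alpha>}. if \<beta> = (\<lambda>_. 0) then c * g \<alpha> else 0)"
      unfolding ps_mult_def ps_const_def by (intro sum.cong) auto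
    then show ?thesis using True by (simp add: le_fun_def)
  next
    case False
    \<comment> \<open>then \<open>\<alpha>\<close> has infinite support, so \<open>g \<alpha> = 0\<close>, and the infinite sum defining
      \<open>ps_mult\<close> is \<open>0\<close> by convention\<close>
    then have "g \<alpha> = 0"
      using assms finite_le_multi_idx by (auto simp: PS_def)
    with False show ?thesis by (simp add: ps_mult_def)
  qed
qed

lemma ps_mult_one_right:
  assumes "f \<in> PS N"
  shows "ps_mult f (ps_const 1) = f"
proof
  fix \<alpha> :: "nat \<Rightarrow> nat"
  show "ps_mult f (ps_const 1) \<alpha> = f \<alpha>"
  proof (cases "finite {\<beta>. \<beta> \<le> \<alpha>}")
    case True
    have "ps_mult f (ps_const 1) \<alpha> = (\<Sum>\<beta>\<in>{\<beta>. \<beta> \<le> \<alpha>}. if \<beta> = \<alpha> then f \<beta> else 0)"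
      unfolding ps_mult_def ps_const_def
      by (intro sum.cong) (auto simp: le_fun_def fun_eq_iff intro: antisym)
    then show ?thesis using True by simp
  next
    case False
    then have "f \<alpha> = 0"
      using assms finite_le_multi_idx by (auto simp: PS_def)
    with False show ?thesis by (simp add: ps_mult_def)
  qed
qed

lemma ps_pderiv_const [simp]: "ps_pderiv i (ps_const c) = (\<lambda>_. 0)"
  by (auto simp: ps_pderiv_def ps_const_def fun_eq_iff dest: fun_cong[of _ _ i])

lemma ps_pderiv_zero [simp]: "ps_pderiv i (\<lambda>_. 0) = (\<lambda>_. 0)"
  by (simp add: ps_pderiv_def)

lemma ps_pderiv_var:
  "ps_pderiv i (ps_var j) = (if i = j then ps_const 1 else (\<lambda>_. (0::'k::comm_ring_1)))"
proof -
  have "\<alpha>(i := Suc (\<alpha> i)) = (\<lambda>_. 0)(j := 1) \<longleftrightarrow> i = j \<and> \<alpha> = (\<lambda>_. 0)" for \<alpha> :: "nat \<Rightarrow> nat"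
    by (auto simp: fun_eq_iff split: if_splits)
  then show ?thesis
    by (auto simp: ps_pderiv_def ps_var_def ps_const_def fun_eq_iff)
qed

lemma ps_var_at_zero [simp]: "ps_var j (\<lambda>_. 0) = 0"
  by (auto simp: ps_var_def fun_eq_iff)

lemma ps_var_in_PS: "j < N \<Longrightarrow> ps_var j \<in> PS N"
  by (auto simp: ps_var_def PS_def multi_idx_def)

lemma ps_const_in_PS: "ps_const c \<in> PS N"
  by (auto simp: ps_const_def PS_def multi_idx_def)

lemma ps_pderiv_in_PS:
  assumes "f \<in> PS N"
  shows "ps_pderiv i f \<in> PS N"
proof -
  have "\<alpha>(i := \<alpha> i + 1) \<notin> multi_idx N" if "\<alpha> \<notin> multi_idx N" for \<alpha>
    using that by (auto simp: multi_idx_def split: if_splits)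
  with assms show ?thesis by (auto simp: PS_def ps_pderiv_def)
qed

lemma ps_eq_if_pderiv_eq:
  fixes f g :: "'k::{idom,ring_char_0} ps"
  assumes "f \<in> PS n" "g \<in> PS n"
    and pderiv_eq: "\<And>j. j < n \<Longrightarrow> ps_pderiv j f = ps_pderiv j g"
    and "f (\<lambda>_. 0) = g (\<lambda>_. 0)"
  shows "f = g"
proof
  fix \<alpha> :: "nat \<Rightarrow> nat"
  show "f \<alpha> = g \<alpha>"
  proof (cases "\<alpha> \<in> multi_idx n \<and> \<alpha> \<noteq> (\<lambda>_. 0)")
    case True
    then obtain j where "\<alpha> j \<noteq> 0" "j < n"
      by (auto simp: multi_idx_def fun_eq_iff) (metis gr0I not_le)
    define \<beta> where "\<beta> = \<alpha>(j := \<alpha> j - 1)"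
    have "\<beta>(j := \<beta> j + 1) = \<alpha>" "of_nat (\<beta> j + 1) \<noteq> (0::'k)"
      using \<open>\<alpha> j \<noteq> 0\<close> by (auto simp: \<beta>_def simp del: of_nat_Suc)
    with fun_cong[OF pderiv_eq[OF \<open>j < n\<close>], of \<beta>] show ?thesis
      by (simp add: ps_pderiv_def)
  next
    case False
    with assms show ?thesis by (auto simp: PS_def)
  qed
qed

lemma coord_der_in_Der: "j < n \<Longrightarrow> f \<in> PS n \<Longrightarrow> coord_der j f \<in> Der n"
  by (auto simp: Der_def coord_der_def PS_def)

lemma sum_coord_der:
  assumes "j < n" "\<And>i. h i (\<lambda>_. 0) = 0"
  shows "(\<Sum>i<n. h i (coord_der j f i)) = h j f"
proof -
  have "(\<Sum>i<n. h i (coord_der j f i)) = (\<Sum>i<n. if i = j then h j f else 0)"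
    using assms(2) by (intro sum.cong) (auto simp: coord_der_def)
  with assms(1) show ?thesis by simp
qed

lemma apply_der_coord_der:
  assumes "j < n"
  shows "apply_der n (coord_der j f) g = ps_mult f (ps_pderiv j g)"
  using sum_coord_der[OF assms, of "\<lambda>i a. ps_mult a (ps_pderiv i g) _"]
  by (simp add: apply_der_def)

lemma der_div_coord_der:
  assumes "j < n"
  shows "der_div n (coord_der j f) = ps_pderiv j f"
proof
  fix \<alpha> show "der_div n (coord_der j f) \<alpha> = ps_pderiv j f \<alpha>"
    using sum_coord_der[OF assms, of "\<lambda>i a. ps_pderiv i a \<alpha>"] by (simp add: der_div_def)
qed

lemma Der_eqI:
  assumes "a \<in> Der n" "b \<in> Der n" "\<And>l. l < n \<Longrightarrow> a l = b l"
  shows "a = b"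
proof
  fix l show "a l = b l"
    using assms by (cases "l < n") (auto simp: Der_def)
qed

lemma der_add_in_Der: "(a::'k::monoid_add der) \<in> Der n \<Longrightarrow> b \<in> Der n \<Longrightarrow> der_add a b \<in> Der n"
  by (simp add: Der_def PS_def der_add_def)

lemma der_scale_in_Der: "(a::'k::mult_zero der) \<in> Der n \<Longrightarrow> der_scale c a \<in> Der n"
  by (simp add: Der_def PS_def der_scale_def)

lemma der_div_add: "der_div n (der_add a b) = (\<lambda>\<alpha>. der_div n a \<alpha> + der_div n b \<alpha>)"
  by (simp add: der_div_def der_add_def ps_pderiv_def sum.distrib distrib_left)

lemma der_div_scale: "der_div n (der_scale c a) = (\<lambda>\<alpha>. c * der_div n a \<alpha>)"
  by (simp add: der_div_def der_scale_def ps_pderiv_def sum_distrib_left algebra_simps)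

lemma Div0_subset_Divc: "Div0 n \<subseteq> Divc n"
proof -
  have "(\<lambda>_. 0) = ps_const 0" by (simp add: ps_const_def fun_eq_iff)
  then show ?thesis by (auto simp: Div0_def Divc_def)
qed

lemma der_bracket_coord_der_one:
  assumes "G \<in> Der n" "j < n"
  shows "der_bracket n G (coord_der j (ps_const 1)) l = (\<lambda>\<alpha>. - ps_pderiv j (G l) \<alpha>)"
proof -
  have "G l \<in> PS n" using assms(1) by (simp add: Der_def)
  have "apply_der n G (coord_der j (ps_const 1) l) = (\<lambda>_. 0)"
    by (simp add: apply_der_def coord_der_def ps_mult_def)
  moreover have "apply_der n (coord_der j (ps_const 1)) (G l) = ps_pderiv j (G l)"
    using ps_mult_const_left[OF ps_pderiv_in_PS[OF \<open>G l \<in> PS n\<close>]]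
    by (simp add: apply_der_coord_der[OF assms(2)])
  ultimately show ?thesis by (simp add: der_bracket_def)
qed

lemma der_bracket_coord_der_var_at_zero:
  assumes "G \<in> Der n" "m < n" "k < n"
  shows "der_bracket n G (coord_der k (ps_var m)) k (\<lambda>_. 0) = G m (\<lambda>_. 0)"
proof -
  have "apply_der n G (ps_var m) (\<lambda>_. 0) = (\<Sum>i<n. if i = m then G m (\<lambda>_. 0) else 0)"
    unfolding apply_der_def
    by (intro sum.cong) (auto simp: ps_mult_at_zero ps_pderiv_var ps_const_def)
  with assms(2) show ?thesis
    by (simp add: der_bracket_def apply_der_coord_der[OF assms(3)] ps_mult_at_zero)
      (simp add: coord_der_def)
qed

lemma der_bracket_coord_der:
  assumes "i < n" "k < n"
  shows "der_bracket n (coord_der i f) (coord_der k g) l =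
    (\<lambda>\<alpha>. ps_mult f (ps_pderiv i (coord_der k g l)) \<alpha> - ps_mult g (ps_pderiv k (coord_der i f l)) \<alpha>)"
  using assms by (simp add: der_bracket_def apply_der_coord_der)

lemma der_bracket_x0_d0_coord_der_one:
  assumes "0 < n" "j < n"
  shows "der_bracket n (coord_der 0 (ps_var 0)) (coord_der j (ps_const 1)) =
    der_scale (if j = 0 then -1 else 0) (coord_der j (ps_const (1::'k::comm_ring_1)))"
proof
  fix l
  show "der_bracket n (coord_der 0 (ps_var 0)) (coord_der j (ps_const 1)) l =
      der_scale (if j = 0 then -1 else 0) (coord_der j (ps_const (1::'k))) l"
    unfolding der_bracket_coord_der_one[OF coord_der_in_Der[OF assms(1) ps_var_in_PS[OF assms(1)]] assms(2)]
    by (auto simp: fun_eq_iff der_scale_def coord_der_def ps_pderiv_var)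
qed

lemma der_bracket_x0_d0_coord_der_var:
  assumes "0 < n" "m < n" "k < n"
  shows "der_bracket n (coord_der 0 (ps_var 0)) (coord_der k (ps_var m)) =
    der_scale (of_bool (m = 0) - of_bool (k = 0)) (coord_der k (ps_var m :: 'k::comm_ring_1 ps))"
proof
  fix l
  show "der_bracket n (coord_der 0 (ps_var 0)) (coord_der k (ps_var m)) l =
      der_scale (of_bool (m = 0) - of_bool (k = 0)) (coord_der k (ps_var m :: 'k ps)) l"
    unfolding der_bracket_coord_der[OF assms(1,3)]
    by (auto simp: fun_eq_iff der_scale_def coord_der_def ps_pderiv_var
      ps_mult_one_right[OF ps_var_in_PS[OF assms(2)]] ps_mult_one_right[OF ps_var_in_PS[OF assms(1)]])
qed

lemma der_scale_in_Divc:
  assumes "(a::'k::comm_ring_1 der) \<in> Divc n"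
  shows "der_scale c a \<in> Divc n"
proof -
  obtain d where "a \<in> Der n" "der_div n a = ps_const d"
    using assms by (auto simp: Divc_def)
  then have "der_div n (der_scale c a) = ps_const (c * d)"
    by (simp add: der_div_scale ps_const_def fun_eq_iff)
  with \<open>a \<in> Der n\<close> show ?thesis by (auto simp: Divc_def der_scale_in_Der)
qed

lemma x0_d0_in_Divc:
  assumes "0 < n"
  shows "coord_der 0 (ps_var 0) \<in> (Divc n :: 'k::comm_ring_1 der set)"
proof -
  have "der_div n (coord_der 0 (ps_var 0)) = ps_const (1::'k)"
    using assms by (simp add: der_div_coord_der ps_pderiv_var)
  moreover have "coord_der 0 (ps_var 0) \<in> (Der n :: 'k der set)"
    using assms by (intro coord_der_in_Der ps_var_in_PS)
  ultimately show ?thesis by (auto simp: Divc_def)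
qed

lemma Divc_decompose:
  fixes a :: "'k::comm_ring_1 der"
  assumes "0 < n" "a \<in> Divc n"
  obtains c a\<^sub>0 where "a\<^sub>0 \<in> Div0 n" "a = der_add a\<^sub>0 (der_scale c (coord_der 0 (ps_var 0)))"
proof -
  let ?E = "coord_der 0 (ps_var 0) :: 'k der"
  obtain c where c: "der_div n a = ps_const c" and "a \<in> Der n"
    using assms(2) by (auto simp: Divc_def)
  define a\<^sub>0 where "a\<^sub>0 = der_add a (der_scale (- c) ?E)"
  have "a\<^sub>0 \<in> Der n"
    unfolding a\<^sub>0_def using assms(1) \<open>a \<in> Der n\<close>
    by (intro der_add_in_Der der_scale_in_Der coord_der_in_Der ps_var_in_PS)
  moreover have "der_div n a\<^sub>0 = (\<lambda>_. 0)"
    using assms(1) c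
    by (simp add: a\<^sub>0_def der_div_add der_div_scale der_div_coord_der ps_pderiv_var ps_const_def
        fun_eq_iff)
  moreover have "a = der_add a\<^sub>0 (der_scale c ?E)"
    by (simp add: a\<^sub>0_def der_add_def der_scale_def fun_eq_iff algebra_simps)
  ultimately show ?thesis using that by (auto simp: Div0_def)
qed

lemma Divc_aut_bracket_eigenvector:
  assumes aut: "Divc_aut n \<sigma>" and fixes_Div0: "\<forall>a\<in>Div0 n. \<sigma> a = a"
    and "e \<in> Divc n" "b \<in> Div0 n" and eigen: "der_bracket n e b = der_scale c b"
  shows "der_bracket n (\<sigma> e) b = der_bracket n e b"
proof -
  have "b \<in> Divc n" using Div0_subset_Divc \<open>b \<in> Div0 n\<close> by blast
  have "der_bracket n (\<sigma> e) b = der_bracket n (\<sigma> e) (\<sigma> b)"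
    using fixes_Div0 \<open>b \<in> Div0 n\<close> by simp
  also have "\<dots> = \<sigma> (der_bracket n e b)"
    using aut \<open>e \<in> Divc n\<close> \<open>b \<in> Divc n\<close> by (simp add: Divc_aut_def)
  also have "\<dots> = der_scale c (\<sigma> b)"
    using aut \<open>b \<in> Divc n\<close> eigen by (simp add: Divc_aut_def)
  also have "\<dots> = der_bracket n e b"
    using fixes_Div0 \<open>b \<in> Div0 n\<close> eigen by simp
  finally show ?thesis .
qed

lemma Divc_aut_fixes_x0_d0:
  fixes \<sigma> :: "'k::field_char_0 der \<Rightarrow> 'k der"
  assumes "2 \<le> n" and aut: "Divc_aut n \<sigma>" and fixes_Div0: "\<forall>a\<in>Div0 n. \<sigma> a = a"
  shows "\<sigma> (coord_der 0 (ps_var 0)) = coord_der 0 (ps_var 0)"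
proof -
  let ?E = "coord_der 0 (ps_var 0) :: 'k der"
  have "0 < n" using assms(1) by simp
  have E_Der: "?E \<in> Der n" using \<open>0 < n\<close> by (intro coord_der_in_Der ps_var_in_PS)
  have E_Divc: "?E \<in> Divc n" using x0_d0_in_Divc[OF \<open>0 < n\<close>] .
  define G where "G = \<sigma> ?E"
  have "G \<in> Der n"
    using aut E_Divc by (auto simp: G_def Divc_aut_def Divc_def dest: bij_betwE)
  note eigen = Divc_aut_bracket_eigenvector[OF aut fixes_Div0 E_Divc, folded G_def]
  have "G l = ?E l" if "l < n" for l
  proof (rule ps_eq_if_pderiv_eq)
    show "G l \<in> PS n" "?E l \<in> PS n" using \<open>G \<in> Der n\<close> E_Der by (simp_all add: Der_def)
    show "ps_pderiv j (G l) = ps_pderiv j (?E l)" if "j < n" for j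
    proof -
      let ?b = "coord_der j (ps_const 1) :: 'k der"
      have "?b \<in> Div0 n"
        using \<open>j < n\<close> by (simp add: Div0_def coord_der_in_Der ps_const_in_PS der_div_coord_der)
      from eigen[OF this der_bracket_x0_d0_coord_der_one[OF \<open>0 < n\<close> \<open>j < n\<close>]]
      show ?thesis
        using der_bracket_coord_der_one[OF \<open>G \<in> Der n\<close> \<open>j < n\<close>]
          der_bracket_coord_der_one[OF E_Der \<open>j < n\<close>]
        by (auto simp: fun_eq_iff dest: fun_cong[of _ _ l])
    qed
    show "G l (\<lambda>_. 0) = ?E l (\<lambda>_. 0)"
    proof -
      define k where "k = (if l = 0 then 1 else 0 :: nat)"
      have "k < n" "k \<noteq> l" using assms(1) by (auto simp: k_def)
      let ?b = "coord_der k (ps_var l) :: 'k der"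
      have "?b \<in> Div0 n"
        using \<open>k < n\<close> \<open>l < n\<close> \<open>k \<noteq> l\<close>
        by (simp add: Div0_def coord_der_in_Der ps_var_in_PS der_div_coord_der ps_pderiv_var)
      from eigen[OF this der_bracket_x0_d0_coord_der_var[OF \<open>0 < n\<close> \<open>l < n\<close> \<open>k < n\<close>]]
      show ?thesis
        using der_bracket_coord_der_var_at_zero[OF \<open>G \<in> Der n\<close> \<open>l < n\<close> \<open>k < n\<close>]
          der_bracket_coord_der_var_at_zero[OF E_Der \<open>l < n\<close> \<open>k < n\<close>]
        by simp
    qed
  qed
  with \<open>G \<in> Der n\<close> E_Der show ?thesis
    unfolding G_def by (rule Der_eqI)
qed

theorem lemma1p8:
  fixes n :: nat and \<sigma> :: "'k::field_char_0 der \<Rightarrow> 'k der"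
  assumes "n \<ge> 2"
    and "Divc_aut n \<sigma>"
    and "\<forall>a\<in>Div0 n. \<sigma> a = a"
  shows "\<forall>a\<in>Divc n. \<sigma> a = a"
proof
  fix a :: "'k der" assume "a \<in> Divc n"
  let ?E = "coord_der 0 (ps_var 0) :: 'k der"
  have "0 < n" using assms(1) by simp
  obtain c a\<^sub>0 where "a\<^sub>0 \<in> Div0 n" and a: "a = der_add a\<^sub>0 (der_scale c ?E)"
    using Divc_decompose[OF \<open>0 < n\<close> \<open>a \<in> Divc n\<close>] .
  have "a\<^sub>0 \<in> Divc n" using \<open>a\<^sub>0 \<in> Div0 n\<close> Div0_subset_Divc by blast
  have "?E \<in> Divc n" using x0_d0_in_Divc[OF \<open>0 < n\<close>] .
  have "\<sigma> a = der_add (\<sigma> a\<^sub>0) (\<sigma> (der_scale c ?E))"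
    using assms(2) \<open>a\<^sub>0 \<in> Divc n\<close> der_scale_in_Divc[OF \<open>?E \<in> Divc n\<close>]
    unfolding a Divc_aut_def by blast
  also have "\<dots> = der_add a\<^sub>0 (der_scale c (\<sigma> ?E))"
    using assms(2,3) \<open>a\<^sub>0 \<in> Div0 n\<close> \<open>?E \<in> Divc n\<close> by (simp add: Divc_aut_def)
  also have "\<dots> = a"
    using Divc_aut_fixes_x0_d0[OF assms] by (simp add: a)
  finally show "\<sigma> a = a" .
qed

end
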